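(* Let $h,n\geq 2$ be integers. Every subgroup $U$ of $\{id\}\times S_n\leq G=S_h\times S_n$ is a neutrality group with respect to $(h,n)$, i.e. there exists a social preference function $F$ with $G_2(F)=U$. In particular, the set of neutrality groups with respect to $(h,n)$ is closed under taking subgroups and under conjugation by elements of $G$.
   Context: Permutations compose as $(\sigma\tau)(x)=\sigma(\tau(x))$; $[k]=\{1,\dots,k\}$. Let $H=[h]$ (individuals), $N=[n]$ (alternatives), $G=S_h\times S_n$. Linear orders on $N$ are identified with elements of $S_n$, and the set of preference profiles is $\mathcal{P}=(S_n)^h$. $G$ acts on $\mathcal{P}$ by $(p^{(\varphi,\psi)})_i=\psi\,p_{\varphi^{-1}(i)}$ for $i\in H$. A social preference function (SPF) is any function $F:\mathcal{P}\to S_n$. The symmetry group of $F$ is $G(F)=\{(\varphi,\psi)\in G: F(p^{(\varphi,\psi)})=\psi F(p)\ \forall p\in\mathcal{P}\}$, and its neutrality group is $G_2(F)=G(F)\cap(\{id\}\times S_n)$. A subgroup $U\leq\{id\}\times S_n$ is a neutrality group with respect to $(h,n)$ if $U=G_2(F)$ for some SPF $F$. *)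

theory Defs
  imports "HOL-Combinatorics.Permutations"
begin

definition perms :: "nat \<Rightarrow> (nat \<Rightarrow> nat) set" where
  "perms k = {p. p permutes {1..k}}"

definition Ggrp :: "nat \<Rightarrow> nat \<Rightarrow> ((nat \<Rightarrow> nat) \<times> (nat \<Rightarrow> nat)) set" where
  "Ggrp h n = perms h \<times> perms n"

definition profiles :: "nat \<Rightarrow> nat \<Rightarrow> (nat \<Rightarrow> (nat \<Rightarrow> nat)) set" where
  "profiles h n = {p. (\<forall>i\<in>{1..h}. p i \<in> perms n) \<and> (\<forall>i. i \<notin> {1..h} \<longrightarrow> p i = id)}"

definition act :: "nat \<Rightarrow> (nat \<Rightarrow> (nat \<Rightarrow> nat)) \<Rightarrow> (nat \<Rightarrow> nat) \<Rightarrow> (nat \<Rightarrow> nat) \<Rightarrow> (nat \<Rightarrow> (nat \<Rightarrow> nat))" where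
  "act h p \<phi> \<psi> = (\<lambda>i. if i \<in> {1..h} then \<psi> \<circ> p (inv \<phi> i) else id)"

text \<open>Social preference functions P -> S_n (only values on P matter).\<close>
definition is_SPF :: "nat \<Rightarrow> nat \<Rightarrow> ((nat \<Rightarrow> (nat \<Rightarrow> nat)) \<Rightarrow> (nat \<Rightarrow> nat)) \<Rightarrow> bool" where
  "is_SPF h n F \<longleftrightarrow> (\<forall>p\<in>profiles h n. F p \<in> perms n)"

definition symgroup :: "nat \<Rightarrow> nat \<Rightarrow> ((nat \<Rightarrow> (nat \<Rightarrow> nat)) \<Rightarrow> (nat \<Rightarrow> nat))
    \<Rightarrow> ((nat \<Rightarrow> nat) \<times> (nat \<Rightarrow> nat)) set" where
  "symgroup h n F = {(\<phi>, \<psi>) \<in> Ggrp h n. \<forall>p\<in>profiles h n. F (act h p \<phi> \<psi>) = \<psi> \<circ> F p}"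

definition neutgroup :: "nat \<Rightarrow> nat \<Rightarrow> ((nat \<Rightarrow> (nat \<Rightarrow> nat)) \<Rightarrow> (nat \<Rightarrow> nat))
    \<Rightarrow> ((nat \<Rightarrow> nat) \<times> (nat \<Rightarrow> nat)) set" where
  "neutgroup h n F = symgroup h n F \<inter> ({id} \<times> perms n)"

definition is_subgroup_G :: "nat \<Rightarrow> nat \<Rightarrow> ((nat \<Rightarrow> nat) \<times> (nat \<Rightarrow> nat)) set \<Rightarrow> bool" where
  "is_subgroup_G h n U \<longleftrightarrow> U \<subseteq> Ggrp h n \<and> (id, id) \<in> U \<and>
     (\<forall>a\<in>U. \<forall>b\<in>U. (fst a \<circ> fst b, snd a \<circ> snd b) \<in> U) \<and>
     (\<forall>a\<in>U. (inv (fst a), inv (snd a)) \<in> U)"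

definition is_neutrality_group :: "nat \<Rightarrow> nat \<Rightarrow> ((nat \<Rightarrow> nat) \<times> (nat \<Rightarrow> nat)) set \<Rightarrow> bool" where
  "is_neutrality_group h n U \<longleftrightarrow> U \<subseteq> {id} \<times> perms n \<and>
     (\<exists>F. is_SPF h n F \<and> neutgroup h n F = U)"

definition conjG :: "(nat \<Rightarrow> nat) \<times> (nat \<Rightarrow> nat) \<Rightarrow> ((nat \<Rightarrow> nat) \<times> (nat \<Rightarrow> nat)) set
    \<Rightarrow> ((nat \<Rightarrow> nat) \<times> (nat \<Rightarrow> nat)) set" where
  "conjG g U = (\<lambda>(a, b). (fst g \<circ> a \<circ> inv (fst g), snd g \<circ> b \<circ> inv (snd g))) ` U"

end

theory Submission
  imports Defs "HOL-Algebra.Sym_Groups" "HOL-Algebra.Group_Action"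
begin

text \<open>Neutrality groups are exactly the subgroups \<open>{id} \<times> K\<close> with \<open>K \<le> S\<^sub>n\<close>.
  For any SPF \<open>F\<close>, the permutations \<open>\<psi>\<close> under which \<open>F\<close> is equivariant form a subgroup.
  Conversely, given \<open>K\<close>, choose a representative \<open>\<tau>\<close> of every right coset \<open>K\<sigma>\<close> and let
  \<open>F(p) = \<sigma> \<tau>\<^sup>-\<^sup>1\<close>, where \<open>\<sigma>\<close> is the ranking of voter 1 and \<open>\<tau>\<close> represents \<open>K\<sigma>\<close>.
  Since \<open>K\<psi>\<sigma> = K\<sigma>\<close> for \<open>\<psi> \<in> K\<close>, every \<open>\<psi> \<in> K\<close> is neutral for \<open>F\<close>; and equivariance under
  \<open>\<psi>\<close> at the unanimous profile \<open>p\<^sub>i = id\<close> forces \<open>K\<psi>\<close> and \<open>K\<close> to have the same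
  representative, hence \<open>\<psi> \<in> K\<close>. Closure under subgroups and conjugation then reduces to
  the same closure properties of the subgroups of \<open>S\<^sub>n\<close>.\<close>

lemma carrier_sym_group: "carrier (sym_group n) = perms n"
  by (simp add: sym_group_def perms_def)

lemma act_id_comp: "act h (act h p id \<beta>) id \<alpha> = act h p id (\<alpha> \<circ> \<beta>)"
  by (auto simp: act_def o_assoc)

lemma act_id_id: "p \<in> profiles h n \<Longrightarrow> act h p id id = p"
  by (auto simp: act_def profiles_def)

lemma act_id_in_profiles:
  "p \<in> profiles h n \<Longrightarrow> \<psi> \<in> perms n \<Longrightarrow> act h p id \<psi> \<in> profiles h n"
  by (auto simp: profiles_def perms_def act_def intro: permutes_compose)

definition neutral_perms :: "nat \<Rightarrow> nat \<Rightarrow> ((nat \<Rightarrow> nat \<Rightarrow> nat) \<Rightarrow> nat \<Rightarrow> nat) \<Rightarrow> (nat \<Rightarrow> nat) set" where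
  "neutral_perms h n F = {\<psi> \<in> perms n. \<forall>p\<in>profiles h n. F (act h p id \<psi>) = \<psi> \<circ> F p}"

lemma neutgroup_eq: "neutgroup h n F = {id} \<times> neutral_perms h n F"
  by (auto simp: neutgroup_def symgroup_def Ggrp_def neutral_perms_def perms_def)

lemma subgroup_neutral_perms: "subgroup (neutral_perms h n F) (sym_group n)"
proof -
  interpret S: group "sym_group n" by (rule sym_group_is_group)
  show ?thesis
  proof (rule S.subgroupI)
    show "neutral_perms h n F \<subseteq> carrier (sym_group n)"
      by (auto simp: neutral_perms_def carrier_sym_group)
    have "id \<in> neutral_perms h n F"
      using act_id_id by (simp add: neutral_perms_def perms_def)
    then show "neutral_perms h n F \<noteq> {}" by blast
  next
    fix \<alpha> \<beta> assume \<alpha>: "\<alpha> \<in> neutral_perms h n F" and \<beta>: "\<beta> \<in> neutral_perms h n F"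
    have "F (act h p id (\<alpha> \<circ> \<beta>)) = (\<alpha> \<circ> \<beta>) \<circ> F p" if p: "p \<in> profiles h n" for p
    proof -
      have "F (act h p id (\<alpha> \<circ> \<beta>)) = F (act h (act h p id \<beta>) id \<alpha>)" by (simp add: act_id_comp)
      also have "\<dots> = \<alpha> \<circ> F (act h p id \<beta>)"
        using \<alpha> \<beta> p act_id_in_profiles by (auto simp: neutral_perms_def)
      also have "\<dots> = (\<alpha> \<circ> \<beta>) \<circ> F p" using \<beta> p by (auto simp: neutral_perms_def)
      finally show ?thesis .
    qed
    with \<alpha> \<beta> show "\<alpha> \<otimes>\<^bsub>sym_group n\<^esub> \<beta> \<in> neutral_perms h n F"
      by (auto simp: neutral_perms_def sym_group_mult perms_def permutes_compose)
  next
    fix \<alpha> assume \<alpha>: "\<alpha> \<in> neutral_perms h n F"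
    then have \<alpha>_perm: "\<alpha> permutes {1..n}" by (simp add: neutral_perms_def perms_def)
    have "F (act h p id (inv' \<alpha>)) = inv' \<alpha> \<circ> F p" if p: "p \<in> profiles h n" for p
    proof -
      have q: "act h p id (inv' \<alpha>) \<in> profiles h n"
        using p \<alpha>_perm by (simp add: act_id_in_profiles perms_def permutes_inv)
      have "F p = F (act h (act h p id (inv' \<alpha>)) id \<alpha>)"
        using p \<alpha>_perm by (simp add: act_id_comp permutes_inv_o act_id_id)
      also have "\<dots> = \<alpha> \<circ> F (act h p id (inv' \<alpha>))" using \<alpha> q by (simp add: neutral_perms_def)
      finally show ?thesis
        using \<alpha>_perm by (simp add: o_assoc permutes_inv_o)
    qed
    with \<alpha> \<alpha>_perm show "inv\<^bsub>sym_group n\<^esub> \<alpha> \<in> neutral_perms h n F"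
      by (auto simp: neutral_perms_def sym_group_carrier perms_def permutes_inv)
  qed
qed

definition rcoset_coord :: "nat \<Rightarrow> (nat \<Rightarrow> nat) set \<Rightarrow> (nat \<Rightarrow> nat) \<Rightarrow> nat \<Rightarrow> nat" where
  "rcoset_coord n K \<sigma> = \<sigma> \<circ> inv' (SOME \<tau>. \<tau> \<in> K #>\<^bsub>sym_group n\<^esub> \<sigma>)"

context
  fixes n :: nat and K :: "(nat \<Rightarrow> nat) set"
  assumes K: "subgroup K (sym_group n)"
begin

interpretation S: group "sym_group n" by (rule sym_group_is_group)

lemma rcoset_rep_mem:
  assumes "\<sigma> \<in> perms n"
  shows "(SOME \<tau>. \<tau> \<in> K #>\<^bsub>sym_group n\<^esub> \<sigma>) \<in> K #>\<^bsub>sym_group n\<^esub> \<sigma>"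
proof -
  have "\<sigma> \<in> K #>\<^bsub>sym_group n\<^esub> \<sigma>"
    using S.rcos_self[OF _ K] assms by (simp add: carrier_sym_group)
  then show ?thesis by (auto simp: some_in_eq)
qed

lemma rcoset_subset_perms: "\<sigma> \<in> perms n \<Longrightarrow> K #>\<^bsub>sym_group n\<^esub> \<sigma> \<subseteq> perms n"
  using S.r_coset_subset_G[OF subgroup.subset[OF K]] by (simp add: carrier_sym_group)

lemma rcoset_coord_perm:
  assumes "\<sigma> \<in> perms n"
  shows "rcoset_coord n K \<sigma> \<in> perms n"
  using rcoset_rep_mem[OF assms] rcoset_subset_perms[OF assms] assms
  by (auto simp: rcoset_coord_def perms_def intro!: permutes_compose permutes_inv)

lemma rcoset_coord_left_mult:
  assumes "\<psi> \<in> K" "\<sigma> \<in> perms n"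
  shows "rcoset_coord n K (\<psi> \<circ> \<sigma>) = \<psi> \<circ> rcoset_coord n K \<sigma>"
proof -
  have "\<psi> \<in> perms n" using subgroup.subset[OF K] assms(1) by (auto simp: carrier_sym_group)
  then have "K #>\<^bsub>sym_group n\<^esub> (\<psi> \<circ> \<sigma>) = (K #>\<^bsub>sym_group n\<^esub> \<psi>) #>\<^bsub>sym_group n\<^esub> \<sigma>"
    using S.coset_mult_assoc[OF subgroup.subset[OF K]] assms(2)
    by (simp add: carrier_sym_group sym_group_mult)
  also have "\<dots> = K #>\<^bsub>sym_group n\<^esub> \<sigma>"
    using S.coset_join2[OF _ K assms(1)] \<open>\<psi> \<in> perms n\<close> by (simp add: carrier_sym_group)
  finally show ?thesis by (simp add: rcoset_coord_def o_assoc)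
qed

lemma rcoset_coord_equivariant_imp_mem:
  assumes \<psi>: "\<psi> \<in> perms n" and eq: "rcoset_coord n K \<psi> = \<psi> \<circ> rcoset_coord n K id"
  shows "\<psi> \<in> K"
proof -
  define r where "r \<sigma> = (SOME \<tau>. \<tau> \<in> K #>\<^bsub>sym_group n\<^esub> \<sigma>)" for \<sigma>
  have id_perm: "id \<in> perms n" by (simp add: perms_def)
  have K_id: "K #>\<^bsub>sym_group n\<^esub> id = K"
    using S.coset_mult_one[OF subgroup.subset[OF K]] by (simp add: sym_group_one)
  have r_mem: "r \<psi> \<in> K #>\<^bsub>sym_group n\<^esub> \<psi>" "r id \<in> K"
    using rcoset_rep_mem[OF \<psi>] rcoset_rep_mem[OF id_perm] K_id by (simp_all add: r_def)
  have "r \<psi> \<in> perms n" "r id \<in> perms n"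
    using r_mem rcoset_subset_perms[OF \<psi>] subgroup.subset[OF K] by (auto simp only: carrier_sym_group)
  then have bij_r: "bij (r \<psi>)" "bij (r id)" by (auto simp: perms_def permutes_bij)
  have "\<psi> \<circ> inv' (r \<psi>) = \<psi> \<circ> inv' (r id)"
    using eq by (simp add: rcoset_coord_def r_def)
  then have "inv' \<psi> \<circ> \<psi> \<circ> inv' (r \<psi>) = inv' \<psi> \<circ> \<psi> \<circ> inv' (r id)"
    by (simp add: o_assoc[symmetric])
  then have "inv' (r \<psi>) = inv' (r id)" using \<psi> by (simp add: perms_def permutes_inv_o)
  then have r_eq: "r \<psi> = r id" using bij_r by (metis inv_inv_eq)
  have "K #>\<^bsub>sym_group n\<^esub> \<psi> = K #>\<^bsub>sym_group n\<^esub> r \<psi>"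
    using S.repr_independence[OF r_mem(1) _ K] \<psi> by (simp add: carrier_sym_group)
  also have "\<dots> = K"
    using S.coset_join2[OF _ K r_mem(2)] \<open>r id \<in> perms n\<close> r_eq by (simp add: carrier_sym_group)
  finally show ?thesis using S.rcos_self[OF _ K, of \<psi>] \<psi> by (simp add: carrier_sym_group)
qed

lemma neutral_perms_rcoset_coord:
  assumes "1 \<le> h"
  shows "neutral_perms h n (\<lambda>p. rcoset_coord n K (p 1)) = K"
proof (rule equalityI; rule subsetI)
  fix \<psi>
  assume "\<psi> \<in> neutral_perms h n (\<lambda>p. rcoset_coord n K (p 1))"
  then have \<psi>: "\<psi> \<in> perms n"
    and equivariant: "\<forall>p\<in>profiles h n. rcoset_coord n K (act h p id \<psi> 1) = \<psi> \<circ> rcoset_coord n K (p 1)"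
    by (simp_all add: neutral_perms_def)
  have "(\<lambda>_. id) \<in> profiles h n" by (simp add: profiles_def perms_def)
  with equivariant have "rcoset_coord n K (act h (\<lambda>_. id) id \<psi> 1) = \<psi> \<circ> rcoset_coord n K id"
    by blast
  then show "\<psi> \<in> K"
    using \<psi> assms by (simp add: act_def rcoset_coord_equivariant_imp_mem)
next
  fix \<psi> assume "\<psi> \<in> K"
  moreover have "\<psi> \<in> perms n" using subgroup.subset[OF K] \<open>\<psi> \<in> K\<close> by (auto simp: carrier_sym_group)
  moreover have "p 1 \<in> perms n" if "p \<in> profiles h n" for p
    using that assms by (simp add: profiles_def)
  ultimately show "\<psi> \<in> neutral_perms h n (\<lambda>p. rcoset_coord n K (p 1))"
    using assms by (simp add: neutral_perms_def act_def rcoset_coord_left_mult)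
qed

lemma is_SPF_rcoset_coord: "1 \<le> h \<Longrightarrow> is_SPF h n (\<lambda>p. rcoset_coord n K (p 1))"
  by (simp add: is_SPF_def profiles_def rcoset_coord_perm)

end

lemma is_neutrality_group_iff:
  assumes "1 \<le> h"
  shows "is_neutrality_group h n U \<longleftrightarrow> (\<exists>K. subgroup K (sym_group n) \<and> U = {id} \<times> K)"
proof
  assume "is_neutrality_group h n U"
  then obtain F where "U = neutgroup h n F" by (auto simp: is_neutrality_group_def)
  then show "\<exists>K. subgroup K (sym_group n) \<and> U = {id} \<times> K"
    using subgroup_neutral_perms neutgroup_eq by blast
next
  assume "\<exists>K. subgroup K (sym_group n) \<and> U = {id} \<times> K"
  then obtain K where K: "subgroup K (sym_group n)" and U: "U = {id} \<times> K" by blast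
  have "U \<subseteq> {id} \<times> perms n" using subgroup.subset[OF K] U by (auto simp: carrier_sym_group)
  then show "is_neutrality_group h n U"
    using is_SPF_rcoset_coord[OF K assms] neutral_perms_rcoset_coord[OF K assms] U
    by (auto simp: is_neutrality_group_def neutgroup_eq)
qed

lemma is_subgroup_G_id_times_iff: "is_subgroup_G h n ({id} \<times> K) \<longleftrightarrow> subgroup K (sym_group n)"
proof
  interpret S: group "sym_group n" by (rule sym_group_is_group)
  assume G: "is_subgroup_G h n ({id} \<times> K)"
  then have K_perms: "K \<subseteq> perms n" by (auto simp: is_subgroup_G_def Ggrp_def)
  show "subgroup K (sym_group n)"
  proof (rule S.subgroupI)
    show "K \<subseteq> carrier (sym_group n)" using K_perms by (simp add: carrier_sym_group)
    show "K \<noteq> {}" using G by (auto simp: is_subgroup_G_def)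
  next
    fix a assume "a \<in> K"
    with G K_perms show "inv\<^bsub>sym_group n\<^esub> a \<in> K"
      by (auto simp: is_subgroup_G_def carrier_sym_group[symmetric])
  next
    fix a b assume "a \<in> K" "b \<in> K"
    with G show "a \<otimes>\<^bsub>sym_group n\<^esub> b \<in> K"
      by (auto simp: is_subgroup_G_def sym_group_mult)
  qed
next
  assume K: "subgroup K (sym_group n)"
  then have K_perms: "K \<subseteq> perms n" by (auto simp: carrier_sym_group[symmetric] dest: subgroup.subset)
  have "id \<in> K" using subgroup.one_closed[OF K] by (simp add: sym_group_one)
  moreover have "a \<circ> b \<in> K" if "a \<in> K" "b \<in> K" for a b
    using subgroup.m_closed[OF K that] by (simp add: sym_group_mult)
  moreover have "inv' a \<in> K" if "a \<in> K" for a
    using subgroup.m_inv_closed[OF K that] that K_perms by (auto simp: carrier_sym_group[symmetric])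
  moreover have "id \<in> perms h" by (simp add: perms_def)
  ultimately show "is_subgroup_G h n ({id} \<times> K)"
    using K_perms by (auto simp: is_subgroup_G_def Ggrp_def)
qed

lemma is_neutrality_group_iff_subgroup:
  assumes "1 \<le> h"
  shows "is_neutrality_group h n U \<longleftrightarrow> U \<subseteq> {id} \<times> perms n \<and> is_subgroup_G h n U"
proof
  assume "is_neutrality_group h n U"
  then obtain K where K: "subgroup K (sym_group n)" and U: "U = {id} \<times> K"
    by (auto simp: is_neutrality_group_iff[OF assms])
  then have "K \<subseteq> perms n" by (auto simp: carrier_sym_group[symmetric] dest: subgroup.subset)
  with K U show "U \<subseteq> {id} \<times> perms n \<and> is_subgroup_G h n U"
    by (auto simp: is_subgroup_G_id_times_iff)
next
  assume U_sub: "U \<subseteq> {id} \<times> perms n \<and> is_subgroup_G h n U"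
  then have "U = {id} \<times> snd ` U" by force
  with U_sub show "is_neutrality_group h n U"
    by (metis is_neutrality_group_iff[OF assms] is_subgroup_G_id_times_iff)
qed

lemma conjG_id_times:
  assumes "\<phi> \<in> perms h"
  shows "conjG (\<phi>, \<psi>) ({id} \<times> K) = {id} \<times> (\<psi> <#\<^bsub>sym_group n\<^esub> K #>\<^bsub>sym_group n\<^esub> inv' \<psi>)"
proof -
  have "\<phi> \<circ> id \<circ> inv' \<phi> = id" using assms by (simp add: perms_def permutes_inv_o)
  moreover have "\<psi> <#\<^bsub>sym_group n\<^esub> K #>\<^bsub>sym_group n\<^esub> inv' \<psi> = (\<lambda>k. \<psi> \<circ> k \<circ> inv' \<psi>) ` K"
    by (auto simp: l_coset_def r_coset_def sym_group_mult)
  ultimately show ?thesis by (auto simp: conjG_def image_iff)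
qed

lemma subgroup_conjugate:
  assumes "subgroup K (sym_group n)" "\<psi> \<in> perms n"
  shows "subgroup (\<psi> <#\<^bsub>sym_group n\<^esub> K #>\<^bsub>sym_group n\<^esub> inv' \<psi>) (sym_group n)"
proof -
  interpret S: group "sym_group n" by (rule sym_group_is_group)
  have \<psi>': "inv' \<psi> \<in> carrier (sym_group n)"
    using assms(2) by (simp add: carrier_sym_group perms_def permutes_inv)
  have "inv\<^bsub>sym_group n\<^esub> (inv' \<psi>) = \<psi>"
    using \<psi>' assms(2) by (simp add: perms_def permutes_bij inv_inv_eq)
  with S.subgroup_conjugation_is_surj1[OF \<psi>' assms(1)] show ?thesis by simp
qed

theorem mainTheorem1:
  fixes h n :: nat
  assumes "h \<ge> 2" and "n \<ge> 2"
  shows "(\<forall>U. is_subgroup_G h n U \<and> U \<subseteq> {id} \<times> perms n \<longrightarrow> is_neutrality_group h n U)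
    \<and> (\<forall>U V. is_neutrality_group h n U \<and> is_subgroup_G h n V \<and> V \<subseteq> U \<longrightarrow> is_neutrality_group h n V)
    \<and> (\<forall>U g. is_neutrality_group h n U \<and> g \<in> Ggrp h n \<longrightarrow> is_neutrality_group h n (conjG g U))"
proof (intro conjI allI impI)
  \<comment> \<open>The argument only needs a first voter.\<close>
  have h: "1 \<le> h" using assms(1) by simp
  note neutrality_iff = is_neutrality_group_iff_subgroup[OF h]
  fix U
  show "is_subgroup_G h n U \<and> U \<subseteq> {id} \<times> perms n \<Longrightarrow> is_neutrality_group h n U"
    using neutrality_iff by blast
  fix V
  show "is_neutrality_group h n U \<and> is_subgroup_G h n V \<and> V \<subseteq> U \<Longrightarrow> is_neutrality_group h n V"
    using neutrality_iff by blast
  fix g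
  assume "is_neutrality_group h n U \<and> g \<in> Ggrp h n"
  then obtain K \<phi> \<psi> where "subgroup K (sym_group n)" "U = {id} \<times> K" "g = (\<phi>, \<psi>)"
    "\<phi> \<in> perms h" "\<psi> \<in> perms n"
    by (auto simp: is_neutrality_group_iff[OF h] Ggrp_def)
  then have "conjG g U = {id} \<times> (\<psi> <#\<^bsub>sym_group n\<^esub> K #>\<^bsub>sym_group n\<^esub> inv' \<psi>)"
    and "subgroup (\<psi> <#\<^bsub>sym_group n\<^esub> K #>\<^bsub>sym_group n\<^esub> inv' \<psi>) (sym_group n)"
    by (simp_all add: conjG_id_times subgroup_conjugate)
  then show "is_neutrality_group h n (conjG g U)"
    by (auto simp: is_neutrality_group_iff[OF h])
qed

end
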